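(* Let $M,N\ge1$ be integers, $\mathbf G\in\mathbb C^{N\times M}$, $\mathbf h_{\mathrm d}\in\mathbb C^M$, $\mathbf h_{\mathrm r}\in\mathbb C^N$, $P_0>0$, $\Gamma>0$, $\sigma^2>0$. For $\mathbf v\in\mathbb C^N$ let $\mathbf\Phi=\mathrm{diag}(\mathbf v)$ and $\mathbf h(\mathbf v)=\mathbf h_{\mathrm d}+\mathbf G^H\mathbf\Phi^H\mathbf h_{\mathrm r}$. For a positive semidefinite $\mathbf R\in\mathbb C^{M\times M}$ let $f(\mathbf R)=\mathrm{tr}\big((\mathbf G\mathbf R\mathbf G^H)^{-1}\big)$ when $\mathbf G\mathbf R\mathbf G^H$ is invertible, and $f(\mathbf R)=+\infty$ otherwise. Consider (single user, $K=1$): (P1): minimize $f(\mathbf w\mathbf w^H+\mathbf R_0)$ over $\mathbf w\in\mathbb C^M$, Hermitian $\mathbf R_0\in\mathbb C^{M\times M}$, and $\mathbf v\in\mathbb C^N$, subject to $\frac{|\mathbf h(\mathbf v)^H\mathbf w|^2}{\mathbf h(\mathbf v)^H\mathbf R_0\mathbf h(\mathbf v)+\sigma^2}\ge\Gamma$, $\|\mathbf w\|^2+\mathrm{tr}(\mathbf R_0)\le P_0$, $\mathbf R_0\succeq\mathbf 0$, and $|v_n|=1$ for all $n=1,\dots,N$; (P2): the same problem with the SINR constraint replaced by $\frac{|\mathbf h(\mathbf v)^H\mathbf w|^2}{\sigma^2}\ge\Gamma$. Then the optimal values of (P1) and (P2) are identical.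
   Context: Setting: an IRS-enabled integrated sensing and communication system with a base station of $M$ antennas, an IRS with $N$ unit-modulus reflecting elements (reflection vector $\mathbf v$), and one single-antenna user. $\mathbf h_{\mathrm d}^H$ is the base-station-to-user channel, $\mathbf h_{\mathrm r}^H$ the IRS-to-user channel, $\mathbf G$ the base-station-to-IRS channel, $\mathbf w$ the information beamformer, $\mathbf R_0$ the dedicated sensing-signal covariance. (P1) corresponds to a user that cannot cancel sensing-signal interference, (P2) to one that can. The objective is (up to a positive constant) the Cramér-Rao bound for estimating the target response matrix with respect to the IRS. *)

theory Defs
  imports "HOL-Analysis.Analysis"
begin

text \<open>Complex matrices are rendered as complex^'c^'r (rows indexed by 'r);
  the dimensions M and N are the cardinalities of finite index types.\<close>

definition cadj :: "complex^'c^'r \<Rightarrow> complex^'r^'c" where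
  "cadj A = (\<chi> i j. cnj (A $ j $ i))"

definition cdiag :: "complex^'n \<Rightarrow> complex^'n^'n" where
  "cdiag v = (\<chi> i j. if i = j then v $ i else 0)"

definition cinner_h :: "complex^'n \<Rightarrow> complex^'n \<Rightarrow> complex" where
  "cinner_h x y = (\<Sum>i\<in>UNIV. cnj (x $ i) * y $ i)"

definition couter :: "complex^'n \<Rightarrow> complex^'n^'n" where
  "couter w = (\<chi> i j. w $ i * cnj (w $ j))"

definition hermitian :: "complex^'n^'n \<Rightarrow> bool" where
  "hermitian R \<longleftrightarrow> cadj R = R"

definition psd :: "complex^'n^'n \<Rightarrow> bool" where
  "psd R \<longleftrightarrow> hermitian R \<and> (\<forall>x. 0 \<le> Re (cinner_h x (R *v x)))"

definition heff :: "complex^'m \<Rightarrow> complex^'m^'n \<Rightarrow> complex^'n \<Rightarrow> complex^'n \<Rightarrow> complex^'m" where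
  "heff h_d G h_r v = h_d + cadj G *v (cadj (cdiag v) *v h_r)"

text \<open>CRB objective f(R) = tr((G R G^H)^{-1}), +infinity if not invertible.
  (The trace of the inverse of a Hermitian positive definite matrix is real.)\<close>
definition crb :: "complex^'m^'n \<Rightarrow> complex^'m^'m \<Rightarrow> ereal" where
  "crb G R = (if invertible (G ** R ** cadj G)
              then ereal (Re (trace (matrix_inv (G ** R ** cadj G)))) else \<infinity>)"

definition common_feas :: "real \<Rightarrow> complex^'m \<Rightarrow> complex^'m^'m \<Rightarrow> complex^'n \<Rightarrow> bool" where
  "common_feas P0 w R0 v \<longleftrightarrow>
     hermitian R0 \<and> (norm w)\<^sup>2 + Re (trace R0) \<le> P0 \<and> psd R0 \<and> (\<forall>n. cmod (v $ n) = 1)"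

definition feas_P1 :: "complex^'m \<Rightarrow> complex^'m^'n \<Rightarrow> complex^'n \<Rightarrow> real \<Rightarrow> real \<Rightarrow> real
    \<Rightarrow> complex^'m \<Rightarrow> complex^'m^'m \<Rightarrow> complex^'n \<Rightarrow> bool" where
  "feas_P1 h_d G h_r P0 \<Gamma> \<sigma>2 w R0 v \<longleftrightarrow>
     (let h = heff h_d G h_r v in
       (cmod (cinner_h h w))\<^sup>2 / (Re (cinner_h h (R0 *v h)) + \<sigma>2) \<ge> \<Gamma>)
     \<and> common_feas P0 w R0 v"

definition feas_P2 :: "complex^'m \<Rightarrow> complex^'m^'n \<Rightarrow> complex^'n \<Rightarrow> real \<Rightarrow> real \<Rightarrow> real
    \<Rightarrow> complex^'m \<Rightarrow> complex^'m^'m \<Rightarrow> complex^'n \<Rightarrow> bool" where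
  "feas_P2 h_d G h_r P0 \<Gamma> \<sigma>2 w R0 v \<longleftrightarrow>
     (let h = heff h_d G h_r v in (cmod (cinner_h h w))\<^sup>2 / \<sigma>2 \<ge> \<Gamma>)
     \<and> common_feas P0 w R0 v"

text \<open>Optimal values (infimum in the extended reals; +infinity if infeasible).\<close>
definition opt_P1 :: "complex^'m \<Rightarrow> complex^'m^'n \<Rightarrow> complex^'n \<Rightarrow> real \<Rightarrow> real \<Rightarrow> real \<Rightarrow> ereal" where
  "opt_P1 h_d G h_r P0 \<Gamma> \<sigma>2 =
     Inf {crb G (couter w + R0) | w R0 v. feas_P1 h_d G h_r P0 \<Gamma> \<sigma>2 w R0 v}"

definition opt_P2 :: "complex^'m \<Rightarrow> complex^'m^'n \<Rightarrow> complex^'n \<Rightarrow> real \<Rightarrow> real \<Rightarrow> real \<Rightarrow> ereal" where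
  "opt_P2 h_d G h_r P0 \<Gamma> \<sigma>2 =
     Inf {crb G (couter w + R0) | w R0 v. feas_P2 h_d G h_r P0 \<Gamma> \<sigma>2 w R0 v}"

end

theory Submission
  imports Defs
begin

text \<open>Feasibility for (P1) implies feasibility for (P2), since the interference term
  \<open>h\<^sup>H R\<^sub>0 h\<close> is nonnegative. Conversely, a pair \<open>(w, R\<^sub>0)\<close> feasible for (P2) can be replaced
  by a pair with the same total covariance \<open>S = w w\<^sup>H + R\<^sub>0\<close>, hence the same objective and
  transmit power, that is feasible for (P1): put \<open>w' = S h / \<surd>(h\<^sup>H S h)\<close> and
  \<open>R\<^sub>0' = S - w' w'\<^sup>H\<close>. The matrix \<open>R\<^sub>0'\<close> is a Schur complement of \<open>S\<close>, hence positive
  semidefinite, and \<open>h\<^sup>H R\<^sub>0' h = 0\<close>, so the user sees no interference and its SINR is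
  \<open>h\<^sup>H S h / \<sigma>\<^sup>2 \<ge> |h\<^sup>H w|\<^sup>2 / \<sigma>\<^sup>2 \<ge> \<Gamma>\<close>.\<close>

lemma cinner_h_add_right: "cinner_h x (a + b) = cinner_h x a + cinner_h x b"
  by (simp add: cinner_h_def distrib_left sum.distrib)

lemma cinner_h_diff_right: "cinner_h x (a - b) = cinner_h x a - cinner_h x b"
  by (simp add: cinner_h_def right_diff_distrib sum_subtractf)

lemma cinner_h_diff_left: "cinner_h (x - y) a = cinner_h x a - cinner_h y a"
  by (simp add: cinner_h_def left_diff_distrib sum_subtractf)

lemma cinner_h_scale_right: "cinner_h x (c *s a) = c * cinner_h x a"
  by (simp add: cinner_h_def sum_distrib_left algebra_simps)

lemma cinner_h_scale_left: "cinner_h (c *s x) a = cnj c * cinner_h x a"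
  by (simp add: cinner_h_def sum_distrib_left algebra_simps)

lemma cinner_h_commute: "cinner_h y x = cnj (cinner_h x y)"
  by (simp add: cinner_h_def mult.commute)

lemma cinner_h_adjoint: "cinner_h (A *v x) y = cinner_h x (cadj A *v y)"
proof -
  have "cinner_h (A *v x) y = (\<Sum>i\<in>UNIV. \<Sum>j\<in>UNIV. cnj (A $ i $ j) * cnj (x $ j) * y $ i)"
    unfolding cinner_h_def matrix_vector_mult_def by (simp add: sum_distrib_right)
  also have "\<dots> = (\<Sum>j\<in>UNIV. \<Sum>i\<in>UNIV. cnj (A $ i $ j) * cnj (x $ j) * y $ i)"
    by (rule sum.swap)
  also have "\<dots> = cinner_h x (cadj A *v y)"
    unfolding cinner_h_def matrix_vector_mult_def cadj_def by (simp add: sum_distrib_left mult_ac)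
  finally show ?thesis .
qed

lemma matrix_vector_mult_smult: "(A::complex^'n^'m) *v (c *s x) = c *s (A *v x)"
  by (simp add: matrix_vector_mult_def vec_eq_iff sum_distrib_left mult_ac)

lemma couter_mult_vec: "couter w *v x = cinner_h w x *s w"
  by (simp add: couter_def matrix_vector_mult_def cinner_h_def vec_eq_iff sum_distrib_left
      algebra_simps)

lemma cinner_h_couter: "cinner_h x (couter w *v x) = complex_of_real ((cmod (cinner_h x w))\<^sup>2)"
  by (metis couter_mult_vec cinner_h_scale_right cinner_h_commute complex_norm_square mult.commute)

lemma hermitian_couter: "hermitian (couter w)"
  by (simp add: hermitian_def cadj_def couter_def vec_eq_iff)

lemma hermitian_add: "hermitian A \<Longrightarrow> hermitian B \<Longrightarrow> hermitian (A + B)"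
  by (simp add: hermitian_def cadj_def vec_eq_iff)

lemma hermitian_diff: "hermitian A \<Longrightarrow> hermitian B \<Longrightarrow> hermitian (A - B)"
  by (simp add: hermitian_def cadj_def vec_eq_iff)

lemma hermitian_cinner_h_self_adjoint:
  "hermitian S \<Longrightarrow> cinner_h (S *v x) y = cinner_h x (S *v y)"
  by (simp add: cinner_h_adjoint hermitian_def)

lemma hermitian_quadratic_form_real:
  "hermitian S \<Longrightarrow> cinner_h x (S *v x) = complex_of_real (Re (cinner_h x (S *v x)))"
  by (metis hermitian_cinner_h_self_adjoint cinner_h_commute Reals_cnj_iff of_real_Re)

lemma psd_couter_add:
  assumes "psd R"
  shows "psd (couter w + R)"
  using assms by (simp add: psd_def hermitian_add hermitian_couter matrix_vector_mult_add_rdistrib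
      cinner_h_add_right cinner_h_couter)

lemma Re_trace_couter: "Re (trace (couter w)) = (norm w)\<^sup>2"
proof -
  have "Re (trace (couter w)) = (\<Sum>i\<in>UNIV. (cmod (w $ i))\<^sup>2)"
    by (simp add: trace_def couter_def complex_mult_cnj cmod_power2)
  also have "\<dots> = (norm w)\<^sup>2"
    by (simp add: norm_vec_def L2_set_def sum_nonneg)
  finally show ?thesis .
qed

lemma transmit_power_eq_Re_trace: "(norm w)\<^sup>2 + Re (trace R) = Re (trace (couter w + R))"
  by (simp add: trace_add Re_trace_couter)

definition deflation_vector :: "complex^'n^'n \<Rightarrow> complex^'n \<Rightarrow> complex^'n" where
  "deflation_vector S h = complex_of_real (1 / sqrt (Re (cinner_h h (S *v h)))) *s (S *v h)"

text \<open>The Schur complement identity: subtracting \<open>w' w'\<^sup>H\<close> from \<open>S\<close> amounts to evaluating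
  the quadratic form of \<open>S\<close> after projecting \<open>x\<close> \<open>S\<close>-orthogonally away from \<open>h\<close>.\<close>

lemma deflation_quadratic_form:
  fixes S :: "complex^'n^'n" and h x :: "complex^'n"
  assumes herm: "hermitian S" and pos: "0 < Re (cinner_h h (S *v h))"
  defines "y \<equiv> x - (cinner_h h (S *v x) / cinner_h h (S *v h)) *s h"
  shows "cinner_h x ((S - couter (deflation_vector S h)) *v x) = cinner_h y (S *v y)"
proof -
  define c where "c = Re (cinner_h h (S *v h))"
  define a where "a = cinner_h h (S *v x)"
  define t where "t = a / complex_of_real c"
  define w' where "w' = deflation_vector S h"
  have "c > 0" using pos by (simp add: c_def)
  have hSh: "cinner_h h (S *v h) = complex_of_real c"
    using hermitian_quadratic_form_real[OF herm] by (simp add: c_def)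
  have xSh: "cinner_h x (S *v h) = cnj a"
    by (metis a_def herm hermitian_cinner_h_self_adjoint cinner_h_commute)
  have w'x: "cinner_h w' x = complex_of_real (1 / sqrt c) * a"
    by (simp add: w'_def deflation_vector_def c_def[symmetric] cinner_h_scale_left
        hermitian_cinner_h_self_adjoint[OF herm] a_def)
  have xw': "cinner_h x w' = complex_of_real (1 / sqrt c) * cnj a"
    by (simp add: w'_def deflation_vector_def c_def[symmetric] cinner_h_scale_right xSh)
  have "complex_of_real (1 / sqrt c) * complex_of_real (1 / sqrt c) = 1 / complex_of_real c"
    using \<open>c > 0\<close> by (simp flip: of_real_mult)
  then have lhs: "cinner_h x ((S - couter w') *v x) = cinner_h x (S *v x) - a * cnj a / complex_of_real c"
    by (simp add: matrix_vector_mult_diff_rdistrib cinner_h_diff_right couter_mult_vec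
        cinner_h_scale_right w'x xw' mult_ac)
  have rhs: "cinner_h (x - t *s h) (S *v (x - t *s h)) =
      cinner_h x (S *v x) - t * cnj a - cnj t * (a - t * complex_of_real c)"
    by (simp add: cinner_h_diff_left cinner_h_scale_left matrix_vector_mult_diff_distrib
        matrix_vector_mult_smult cinner_h_diff_right cinner_h_scale_right xSh hSh
        a_def[symmetric]) (simp add: algebra_simps)
  have "t * cnj a + cnj t * (a - t * complex_of_real c) = a * cnj a / complex_of_real c"
    using \<open>c > 0\<close> by (simp add: t_def field_simps)
  then show ?thesis
    unfolding y_def hSh w'_def[symmetric] a_def[symmetric] t_def[symmetric] lhs rhs
    by (simp add: diff_diff_eq)
qed

lemma psd_deflation:
  assumes "psd S" and "0 < Re (cinner_h h (S *v h))"
  shows "psd (S - couter (deflation_vector S h))"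
proof -
  have "hermitian S" using assms(1) by (simp add: psd_def)
  have "0 \<le> Re (cinner_h x ((S - couter (deflation_vector S h)) *v x))" for x
    using assms(1) deflation_quadratic_form[OF \<open>hermitian S\<close> assms(2), of x]
    by (simp add: psd_def)
  then show ?thesis
    by (simp add: psd_def hermitian_diff hermitian_couter \<open>hermitian S\<close>)
qed

lemma deflation_annihilates_direction:
  assumes "hermitian S" and pos: "0 < Re (cinner_h h (S *v h))"
  shows "cinner_h h ((S - couter (deflation_vector S h)) *v h) = 0"
proof -
  have "cinner_h h (S *v h) \<noteq> 0"
    using pos by auto
  then show ?thesis
    using deflation_quadratic_form[OF assms, of h] by (simp add: cinner_h_def)
qed

lemma cinner_h_deflation_vector:
  assumes "hermitian S" and pos: "0 < Re (cinner_h h (S *v h))"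
  shows "cinner_h h (deflation_vector S h) = complex_of_real (sqrt (Re (cinner_h h (S *v h))))"
proof -
  define c where "c = Re (cinner_h h (S *v h))"
  have "cinner_h h (deflation_vector S h) = complex_of_real (1 / sqrt c) * complex_of_real c"
    using hermitian_quadratic_form_real[OF assms(1), of h]
    by (simp add: deflation_vector_def cinner_h_scale_right c_def)
  also have "\<dots> = complex_of_real (sqrt c)"
  proof -
    have "1 / sqrt c * c = sqrt c"
      using pos by (simp add: c_def real_div_sqrt)
    then show ?thesis
      by (metis of_real_mult)
  qed
  finally show ?thesis
    by (simp add: c_def)
qed

lemma feas_P1_imp_feas_P2:
  assumes "\<sigma>2 > 0" and "feas_P1 h_d G h_r P0 \<Gamma> \<sigma>2 w R0 v"
  shows "feas_P2 h_d G h_r P0 \<Gamma> \<sigma>2 w R0 v"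
proof -
  define h where "h = heff h_d G h_r v"
  have "0 \<le> Re (cinner_h h (R0 *v h))"
    using assms(2) by (simp add: feas_P1_def common_feas_def psd_def)
  then have "(cmod (cinner_h h w))\<^sup>2 / (Re (cinner_h h (R0 *v h)) + \<sigma>2) \<le> (cmod (cinner_h h w))\<^sup>2 / \<sigma>2"
    using assms(1) by (intro divide_left_mono) auto
  then show ?thesis
    using assms(2) by (auto simp: feas_P1_def feas_P2_def h_def[symmetric] Let_def)
qed

lemma feas_P2_imp_feas_P1_same_covariance:
  assumes "\<Gamma> > 0" and "\<sigma>2 > 0" and feas: "feas_P2 h_d G h_r P0 \<Gamma> \<sigma>2 w R0 v"
  shows "\<exists>w' R0'. feas_P1 h_d G h_r P0 \<Gamma> \<sigma>2 w' R0' v \<and> couter w' + R0' = couter w + R0"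
proof -
  define h where "h = heff h_d G h_r v"
  define S where "S = couter w + R0"
  define c where "c = Re (cinner_h h (S *v h))"
  define w' where "w' = deflation_vector S h"
  define R0' where "R0' = S - couter w'"
  have sinr: "\<Gamma> \<le> (cmod (cinner_h h w))\<^sup>2 / \<sigma>2" and common: "common_feas P0 w R0 v"
    using feas by (simp_all add: feas_P2_def h_def Let_def)
  then have "psd R0" by (simp add: common_feas_def)
  then have "psd S" by (simp add: S_def psd_couter_add)
  have "(cmod (cinner_h h w))\<^sup>2 \<le> c"
    using \<open>psd R0\<close> by (simp add: c_def S_def psd_def matrix_vector_mult_add_rdistrib
        cinner_h_add_right cinner_h_couter)
  moreover have "\<Gamma> * \<sigma>2 \<le> (cmod (cinner_h h w))\<^sup>2"
    using sinr assms(2) by (simp add: pos_le_divide_eq)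
  moreover have "\<Gamma> * \<sigma>2 > 0"
    using assms(1,2) by simp
  ultimately have "c > 0"
    by linarith
  have herm: "hermitian S" using \<open>psd S\<close> by (simp add: psd_def)
  have "(cmod (cinner_h h w'))\<^sup>2 / (Re (cinner_h h (R0' *v h)) + \<sigma>2) = c / \<sigma>2"
    using \<open>c > 0\<close> deflation_annihilates_direction[OF herm] cinner_h_deflation_vector[OF herm]
    by (simp add: R0'_def w'_def c_def)
  moreover have "\<Gamma> \<le> c / \<sigma>2"
    using sinr \<open>(cmod (cinner_h h w))\<^sup>2 \<le> c\<close> assms(2)
    by (meson divide_right_mono less_imp_le order_trans)
  moreover have "psd R0'"
    using \<open>psd S\<close> \<open>c > 0\<close> by (simp add: R0'_def w'_def c_def psd_deflation)
  moreover have same: "couter w' + R0' = couter w + R0"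
    by (simp add: R0'_def S_def)
  moreover have "(norm w')\<^sup>2 + Re (trace R0') \<le> P0"
    using common by (simp only: transmit_power_eq_Re_trace same common_feas_def)
  ultimately have "feas_P1 h_d G h_r P0 \<Gamma> \<sigma>2 w' R0' v"
    using common by (simp add: feas_P1_def common_feas_def h_def[symmetric] Let_def psd_def)
  with same show ?thesis
    by blast
qed

theorem proposition3:
  fixes G :: "complex^'m^'n" and h_d :: "complex^'m" and h_r :: "complex^'n"
    and P0 \<Gamma> \<sigma>2 :: real
  assumes "P0 > 0" and "\<Gamma> > 0" and "\<sigma>2 > 0"
  shows "opt_P1 h_d G h_r P0 \<Gamma> \<sigma>2 = opt_P2 h_d G h_r P0 \<Gamma> \<sigma>2"
proof -
  have "{crb G (couter w + R0) | w R0 v. feas_P1 h_d G h_r P0 \<Gamma> \<sigma>2 w R0 v}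
      = {crb G (couter w + R0) | w R0 v. feas_P2 h_d G h_r P0 \<Gamma> \<sigma>2 w R0 v}"
    (is "?V1 = ?V2")
  proof (intro equalityI subsetI)
    fix y
    assume "y \<in> ?V1"
    then show "y \<in> ?V2"
      using feas_P1_imp_feas_P2[OF assms(3)] by blast
  next
    fix y
    assume "y \<in> ?V2"
    then obtain w R0 v where y: "y = crb G (couter w + R0)"
      and "feas_P2 h_d G h_r P0 \<Gamma> \<sigma>2 w R0 v"
      by blast
    then obtain w' R0' where "feas_P1 h_d G h_r P0 \<Gamma> \<sigma>2 w' R0' v"
      and "couter w' + R0' = couter w + R0"
      using feas_P2_imp_feas_P1_same_covariance[OF assms(2,3)] by blast
    then show "y \<in> ?V1"
      unfolding y by (metis (mono_tags, lifting) mem_Collect_eq)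
  qed
  then show ?thesis
    unfolding opt_P1_def opt_P2_def by simp
qed

end
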